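(* Let $b_1,b_2,b_3\in\mathbb{R}$ with $b_1b_2b_3\neq 0$, let $C^b(x)=-\frac{b_3}{2b_1}x_1^2+x_3$ and $H^b(x)=\frac{b_1}{2}\big(x_2^2-\frac{b_2}{b_3}x_3^2\big)$, and for $\alpha,\beta,\gamma,\delta\in\mathbb{R}$ put $$C^b_{\alpha\beta}=\alpha C^b+\beta H^b=-\frac{\alpha b_3}{2b_1}x_1^2+\frac{\beta b_1}{2}x_2^2+\alpha x_3-\frac{\beta b_1b_2}{2b_3}x_3^2,\qquad H^b_{\gamma\delta}=\gamma C^b+\delta H^b,$$ and $$\{f,g\}^b_{\alpha\beta}=\det\begin{pmatrix}-\frac{\alpha b_3}{b_1}x_1 & \beta b_1x_2 & \alpha-\frac{\beta b_1b_2}{b_3}x_3\\[2pt] \frac{\partial f}{\partial x_1}&\frac{\partial f}{\partial x_2}&\frac{\partial f}{\partial x_3}\\[2pt] \frac{\partial g}{\partial x_1}&\frac{\partial g}{\partial x_2}&\frac{\partial g}{\partial x_3}\end{pmatrix},\qquad f,g\in C^\infty(\mathbb{R}^3,\mathbb{R}).$$ Then for every matrix $\begin{pmatrix}\alpha&\beta\\ \gamma&\delta\end{pmatrix}\in SL(2;\mathbb{R})$: (i) $(\mathbb{R}^3,\{\cdot,\cdot\}^b_{\alpha\beta},H^b_{\gamma\delta})$ is a Hamilton-Poisson realization of the system $$\dot x_1=b_1x_2,\qquad \dot x_2=b_2x_1x_3,\qquad \dot x_3=b_3x_1x_2,$$ i.e. $\{\cdot,\cdot\}^b_{\alpha\beta}$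 is a Poisson bracket and $\dot x_i=\{x_i,H^b_{\gamma\delta}\}^b_{\alpha\beta}$ for $i=1,2,3$; thus the system admits a family of Hamilton-Poisson realizations parametrized by $SL(2;\mathbb{R})$; (ii) $C^b_{\alpha\beta}$ is a Casimir of $(\mathbb{R}^3,\{\cdot,\cdot\}^b_{\alpha\beta})$, i.e. $\{C^b_{\alpha\beta},f\}^b_{\alpha\beta}=0$ for all $f\in C^\infty(\mathbb{R}^3,\mathbb{R})$. *)

theory Defs
  imports "HOL-Analysis.Analysis"
begin

type_synonym fn3 = "real^3 \<Rightarrow> real"

definition pderiv3 :: "3 \<Rightarrow> fn3 \<Rightarrow> fn3" where
  "pderiv3 i f = (\<lambda>x. frechet_derivative f (at x) (axis i 1))"

fun Ck3 :: "nat \<Rightarrow> fn3 \<Rightarrow> bool" where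
  "Ck3 0 f = continuous_on UNIV f"
| "Ck3 (Suc k) f = (f differentiable_on UNIV \<and> continuous_on UNIV f \<and>
                    (\<forall>i. Ck3 k (pderiv3 i f)))"

definition smooth3 :: "fn3 \<Rightarrow> bool" where
  "smooth3 f \<longleftrightarrow> (\<forall>k. Ck3 k f)"

definition poisson_bracket3 :: "(fn3 \<Rightarrow> fn3 \<Rightarrow> fn3) \<Rightarrow> bool" where
  "poisson_bracket3 B \<longleftrightarrow>
     (\<forall>f g. smooth3 f \<longrightarrow> smooth3 g \<longrightarrow> smooth3 (B f g)) \<and>
     (\<forall>f g h a c. smooth3 f \<longrightarrow> smooth3 g \<longrightarrow> smooth3 h \<longrightarrow>
        B (\<lambda>x. a * f x + c * g x) h = (\<lambda>x. a * B f h x + c * B g h x) \<and>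
        B h (\<lambda>x. a * f x + c * g x) = (\<lambda>x. a * B h f x + c * B h g x)) \<and>
     (\<forall>f g. smooth3 f \<longrightarrow> smooth3 g \<longrightarrow> B f g = (\<lambda>x. - B g f x)) \<and>
     (\<forall>f g h. smooth3 f \<longrightarrow> smooth3 g \<longrightarrow> smooth3 h \<longrightarrow>
        B f (\<lambda>x. g x * h x) = (\<lambda>x. B f g x * h x + g x * B f h x)) \<and>
     (\<forall>f g h. smooth3 f \<longrightarrow> smooth3 g \<longrightarrow> smooth3 h \<longrightarrow>
        (\<lambda>x. B f (B g h) x + B g (B h f) x + B h (B f g) x) = (\<lambda>x. 0))"

definition hamilton_poisson_realization3 ::
  "(fn3 \<Rightarrow> fn3 \<Rightarrow> fn3) \<Rightarrow> fn3 \<Rightarrow> (real^3 \<Rightarrow> real^3) \<Rightarrow> bool" where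
  "hamilton_poisson_realization3 B H X \<longleftrightarrow>
     poisson_bracket3 B \<and> smooth3 H \<and>
     (\<forall>i x. X x $ i = B (\<lambda>y. y $ i) H x)"

definition casimir3 :: "(fn3 \<Rightarrow> fn3 \<Rightarrow> fn3) \<Rightarrow> fn3 \<Rightarrow> bool" where
  "casimir3 B C \<longleftrightarrow> smooth3 C \<and> (\<forall>f. smooth3 f \<longrightarrow> B C f = (\<lambda>x. 0))"

definition Cb :: "real \<Rightarrow> real \<Rightarrow> real \<Rightarrow> fn3" where
  "Cb b1 b2 b3 = (\<lambda>x. - (b3 / (2 * b1)) * (x$1)^2 + x$3)"

definition Hb :: "real \<Rightarrow> real \<Rightarrow> real \<Rightarrow> fn3" where
  "Hb b1 b2 b3 = (\<lambda>x. (b1 / 2) * ((x$2)^2 - (b2 / b3) * (x$3)^2))"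

definition bracket_b :: "real \<Rightarrow> real \<Rightarrow> real \<Rightarrow> real \<Rightarrow> real \<Rightarrow> fn3 \<Rightarrow> fn3 \<Rightarrow> fn3" where
  "bracket_b b1 b2 b3 \<alpha> \<beta> f g = (\<lambda>x. det (vector [
      vector [- (\<alpha> * b3 / b1) * x$1, \<beta> * b1 * x$2, \<alpha> - (\<beta> * b1 * b2 / b3) * x$3],
      vector [pderiv3 1 f x, pderiv3 2 f x, pderiv3 3 f x],
      vector [pderiv3 1 g x, pderiv3 2 g x, pderiv3 3 g x]] :: real^3^3))"

definition system_b :: "real \<Rightarrow> real \<Rightarrow> real \<Rightarrow> real^3 \<Rightarrow> real^3" where
  "system_b b1 b2 b3 x = vector [b1 * x$2, b2 * x$1 * x$3, b3 * x$1 * x$2]"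

end

theory Submission
  imports Defs
begin

text \<open>The bracket \<open>{f,g}\<^sup>b\<^sub>\<alpha>\<^sub>\<beta>\<close> is the Nambu bracket \<open>det(\<nabla>C, \<nabla>f, \<nabla>g)\<close> of
  \<open>C = C\<^sup>b\<^sub>\<alpha>\<^sub>\<beta>\<close>. For every smooth \<open>C\<close> on \<open>\<real>\<^sup>3\<close> such a bracket is Poisson: bilinearity, skew-symmetry
  and the Leibniz rule are immediate, and after expanding the Jacobi identity everything cancels
  by the symmetry of second partial derivatives (proved here from the mean value theorem).
  It has \<open>C\<close> as a Casimir because a determinant with two equal rows vanishes. Bilinearity
  and alternation of the determinant give
  \<open>{f, \<gamma>C\<^sup>b + \<delta>H\<^sup>b}\<^bsub>\<alpha>C\<^sup>b + \<beta>H\<^sup>b\<^esub> = (\<alpha>\<delta> - \<beta>\<gamma>) {f, H\<^sup>b}\<^bsub>C\<^sup>b\<^esub>\<close>, so for a matrix in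
  \<open>SL(2;\<real>)\<close> the Hamiltonian equations are those of \<open>H\<^sup>b\<close> for the Nambu bracket of \<open>C\<^sup>b\<close>,
  which is the given system.\<close>

lemmas has_frechet_derivative = frechet_derivative_works[THEN iffD1]

lemma pderiv3_eq_has_derivative:
  "(f has_derivative f') (at x) \<Longrightarrow> pderiv3 i f x = f' (axis i 1)"
  unfolding pderiv3_def using frechet_derivative_at by metis

lemma pderiv3_add:
  "f differentiable (at x) \<Longrightarrow> g differentiable (at x) \<Longrightarrow>
   pderiv3 i (\<lambda>y. f y + g y) x = pderiv3 i f x + pderiv3 i g x"
  using pderiv3_eq_has_derivative[OF has_derivative_add[OF has_frechet_derivative has_frechet_derivative]]
  by (auto simp: pderiv3_def)

lemma pderiv3_diff:
  "f differentiable (at x) \<Longrightarrow> g differentiable (at x) \<Longrightarrow>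
   pderiv3 i (\<lambda>y. f y - g y) x = pderiv3 i f x - pderiv3 i g x"
  using pderiv3_eq_has_derivative[OF has_derivative_diff[OF has_frechet_derivative has_frechet_derivative]]
  by (auto simp: pderiv3_def)

lemma pderiv3_mult:
  "f differentiable (at x) \<Longrightarrow> g differentiable (at x) \<Longrightarrow>
   pderiv3 i (\<lambda>y. f y * g y) x = pderiv3 i f x * g x + f x * pderiv3 i g x"
  using pderiv3_eq_has_derivative[OF has_derivative_mult[OF has_frechet_derivative has_frechet_derivative]]
  by (auto simp: pderiv3_def)

lemma pderiv3_const: "pderiv3 i (\<lambda>y. c) x = 0"
  by (simp add: pderiv3_eq_has_derivative[OF has_derivative_const])

lemma pderiv3_component: "pderiv3 i (\<lambda>y. y $ k) x = (if i = k then 1 else 0)"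
  by (simp add: pderiv3_eq_has_derivative[OF bounded_linear_imp_has_derivative[OF bounded_linear_vec_nth]]
      axis_def)

lemmas pderiv3_simps = pderiv3_add pderiv3_diff pderiv3_mult pderiv3_const pderiv3_component

lemma Ck3_Suc_imp_differentiable: "Ck3 (Suc k) f \<Longrightarrow> f differentiable (at x)"
  by (auto simp: differentiable_on_def)

lemma Ck3_Suc_imp_Ck3: "Ck3 (Suc k) f \<Longrightarrow> Ck3 k f"
  by (induction k arbitrary: f) auto

lemma Ck3_const: "Ck3 k (\<lambda>x. c)"
proof (induction k arbitrary: c)
  case (Suc k)
  have "pderiv3 i (\<lambda>x. c) = (\<lambda>x. 0)" for i
    by (simp add: fun_eq_iff pderiv3_const)
  with Suc show ?case by simp
qed simp

lemma Ck3_component: "Ck3 k (\<lambda>x. x $ j)"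
proof (cases k)
  case (Suc m)
  have "pderiv3 i (\<lambda>x. x $ j) = (\<lambda>x. if i = j then 1 else 0)" for i
    by (simp add: fun_eq_iff pderiv3_component)
  then show ?thesis
    using Suc by (simp add: Ck3_const continuous_on_component differentiable_on_def
        bounded_linear_imp_differentiable[OF bounded_linear_vec_nth])
qed (simp add: continuous_on_component)

lemma Ck3_add: "Ck3 k f \<Longrightarrow> Ck3 k g \<Longrightarrow> Ck3 k (\<lambda>x. f x + g x)"
proof (induction k arbitrary: f g)
  case (Suc k)
  have "pderiv3 i (\<lambda>x. f x + g x) = (\<lambda>x. pderiv3 i f x + pderiv3 i g x)" for i
    using Suc.prems[THEN Ck3_Suc_imp_differentiable] by (simp add: fun_eq_iff pderiv3_add)
  with Suc show ?case by (auto simp: continuous_on_add differentiable_on_def)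
qed (simp add: continuous_on_add)

lemma Ck3_mult: "Ck3 k f \<Longrightarrow> Ck3 k g \<Longrightarrow> Ck3 k (\<lambda>x. f x * g x)"
proof (induction k arbitrary: f g)
  case (Suc k)
  have "pderiv3 i (\<lambda>x. f x * g x) = (\<lambda>x. pderiv3 i f x * g x + f x * pderiv3 i g x)" for i
    using Suc.prems[THEN Ck3_Suc_imp_differentiable] by (simp add: fun_eq_iff pderiv3_mult)
  moreover have "Ck3 k (\<lambda>x. pderiv3 i f x * g x + f x * pderiv3 i g x)" for i
    using Suc Ck3_Suc_imp_Ck3 by (intro Ck3_add) auto
  ultimately show ?case
    using Suc.prems by (auto simp: continuous_on_mult differentiable_on_def)
qed (simp add: continuous_on_mult)

lemma smooth3_const [intro]: "smooth3 (\<lambda>x. c)"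
  by (simp add: smooth3_def Ck3_const)

lemma smooth3_component [intro]: "smooth3 (\<lambda>x. x $ j)"
  by (simp add: smooth3_def Ck3_component)

lemma smooth3_add [intro]: "smooth3 f \<Longrightarrow> smooth3 g \<Longrightarrow> smooth3 (\<lambda>x. f x + g x)"
  by (simp add: smooth3_def Ck3_add)

lemma smooth3_mult [intro]: "smooth3 f \<Longrightarrow> smooth3 g \<Longrightarrow> smooth3 (\<lambda>x. f x * g x)"
  by (simp add: smooth3_def Ck3_mult)

lemma smooth3_diff [intro]: "smooth3 f \<Longrightarrow> smooth3 g \<Longrightarrow> smooth3 (\<lambda>x. f x - g x)"
  using smooth3_add[OF _ smooth3_mult[OF smooth3_const[of "-1"]], of f g] by simp

lemma smooth3_pderiv3 [intro]: "smooth3 f \<Longrightarrow> smooth3 (pderiv3 i f)"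
  unfolding smooth3_def by (metis Ck3.simps(2))

lemma smooth3_imp_differentiable [simp]: "smooth3 f \<Longrightarrow> f differentiable (at x)"
  unfolding smooth3_def using Ck3_Suc_imp_differentiable by blast

lemma smooth3_imp_isCont: "smooth3 f \<Longrightarrow> isCont f x"
  unfolding smooth3_def by (metis Ck3.simps(1) continuous_on_eq_continuous_at open_UNIV UNIV_I)

lemma has_real_derivative_along_line:
  assumes "g differentiable (at (q + s *\<^sub>R w))"
  shows "((\<lambda>s. g (q + s *\<^sub>R w)) has_real_derivative frechet_derivative g (at (q + s *\<^sub>R w)) w) (at s)"
proof -
  let ?g' = "frechet_derivative g (at (q + s *\<^sub>R w))"
  have "((\<lambda>s. q + s *\<^sub>R w) has_derivative (\<lambda>h. h *\<^sub>R w)) (at s)"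
    by (auto intro!: derivative_eq_intros)
  from has_derivative_compose[OF this has_frechet_derivative[OF assms]]
  have "((\<lambda>s. g (q + s *\<^sub>R w)) has_derivative (\<lambda>h. ?g' (h *\<^sub>R w))) (at s)" .
  moreover have "linear ?g'"
    using has_frechet_derivative[OF assms] has_derivative_linear by blast
  ultimately show ?thesis
    by (simp add: has_field_derivative_def linear_cmul mult_commute_abs)
qed

lemma has_real_derivative_pderiv3:
  "smooth3 g \<Longrightarrow>
   ((\<lambda>s. g (q + s *\<^sub>R axis i 1)) has_real_derivative pderiv3 i g (q + s *\<^sub>R axis i 1)) (at s)"
  using has_real_derivative_along_line[of g q s "axis i 1"] by (simp add: pderiv3_def)

lemma second_difference_mean_value:
  fixes i j :: 3 and p :: "real^3"
  assumes f: "smooth3 f" and h: "h > 0"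
  defines "u \<equiv> axis i 1" and "v \<equiv> axis j 1"
  obtains a b where "0 < a" "a < h" "0 < b" "b < h"
    "f (p + h *\<^sub>R u + h *\<^sub>R v) - f (p + h *\<^sub>R u) - f (p + h *\<^sub>R v) + f p
       = h * h * pderiv3 j (pderiv3 i f) (p + a *\<^sub>R u + b *\<^sub>R v)"
proof -
  define \<phi> where "\<phi> s = f ((p + h *\<^sub>R v) + s *\<^sub>R u) - f (p + s *\<^sub>R u)" for s
  have "(\<phi> has_real_derivative
          pderiv3 i f ((p + h *\<^sub>R v) + s *\<^sub>R u) - pderiv3 i f (p + s *\<^sub>R u)) (at s)" for s
    unfolding \<phi>_def u_def by (intro DERIV_diff has_real_derivative_pderiv3 f)
  from MVT2[OF h this] obtain a where a: "0 < a" "a < h"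
    "\<phi> h - \<phi> 0 = h * (pderiv3 i f ((p + a *\<^sub>R u) + h *\<^sub>R v) - pderiv3 i f ((p + a *\<^sub>R u) + 0 *\<^sub>R v))"
    by (auto simp: algebra_simps)
  have "((\<lambda>t. pderiv3 i f ((p + a *\<^sub>R u) + t *\<^sub>R v)) has_real_derivative
          pderiv3 j (pderiv3 i f) ((p + a *\<^sub>R u) + t *\<^sub>R v)) (at t)" for t
    unfolding v_def by (intro has_real_derivative_pderiv3 smooth3_pderiv3 f)
  from MVT2[OF h this] obtain b where "0 < b" "b < h"
    "pderiv3 i f ((p + a *\<^sub>R u) + h *\<^sub>R v) - pderiv3 i f ((p + a *\<^sub>R u) + 0 *\<^sub>R v)
       = h * pderiv3 j (pderiv3 i f) (p + a *\<^sub>R u + b *\<^sub>R v)"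
    by auto
  moreover have "f (p + h *\<^sub>R u + h *\<^sub>R v) - f (p + h *\<^sub>R u) - f (p + h *\<^sub>R v) + f p = \<phi> h - \<phi> 0"
    by (simp add: \<phi>_def algebra_simps)
  ultimately show ?thesis
    using that a by simp
qed

lemma pderiv3_commute:
  assumes f: "smooth3 f"
  shows "pderiv3 j (pderiv3 i f) p = pderiv3 i (pderiv3 j f) p"
proof (rule ccontr)
  define A where "A = pderiv3 j (pderiv3 i f)"
  define B where "B = pderiv3 i (pderiv3 j f)"
  define u where "u = (axis i 1 :: real^3)"
  define v where "v = (axis j 1 :: real^3)"
  assume "pderiv3 j (pderiv3 i f) p \<noteq> pderiv3 i (pderiv3 j f) p"
  then have e: "\<bar>A p - B p\<bar> / 2 > 0"
    by (simp add: A_def B_def)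
  have "isCont A p" "isCont B p"
    using f by (auto simp: A_def B_def intro: smooth3_imp_isCont)
  then obtain dA dB where dA: "dA > 0" "\<And>y. dist y p < dA \<Longrightarrow> dist (A y) (A p) < \<bar>A p - B p\<bar> / 2"
    and dB: "dB > 0" "\<And>y. dist y p < dB \<Longrightarrow> dist (B y) (B p) < \<bar>A p - B p\<bar> / 2"
    using e unfolding continuous_at_eps_delta by metis
  define h where "h = min dA dB / 2"
  have h: "h > 0" using dA dB by (simp add: h_def)
  have near: "dist (p + a *\<^sub>R u + b *\<^sub>R v) p < min dA dB" if "0 < a" "a < h" "0 < b" "b < h" for a b
  proof -
    have "dist (p + a *\<^sub>R u + b *\<^sub>R v) p \<le> norm (a *\<^sub>R u) + norm (b *\<^sub>R v)"
      unfolding dist_norm by (metis add_diff_cancel_left' add.assoc norm_triangle_ineq)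
    also have "\<dots> < min dA dB" using that by (simp add: u_def v_def h_def)
    finally show ?thesis .
  qed
  obtain a b where ab: "0 < a" "a < h" "0 < b" "b < h"
    "f (p + h *\<^sub>R u + h *\<^sub>R v) - f (p + h *\<^sub>R u) - f (p + h *\<^sub>R v) + f p
       = h * h * A (p + a *\<^sub>R u + b *\<^sub>R v)"
    using second_difference_mean_value[OF f h] unfolding A_def u_def v_def by metis
  \<comment> \<open>The same second difference, read with the roles of \<open>u\<close> and \<open>v\<close> exchanged.\<close>
  obtain a' b' where ab': "0 < a'" "a' < h" "0 < b'" "b' < h"
    "f (p + h *\<^sub>R v + h *\<^sub>R u) - f (p + h *\<^sub>R v) - f (p + h *\<^sub>R u) + f p
       = h * h * B (p + b' *\<^sub>R u + a' *\<^sub>R v)"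
  proof -
    obtain b' a' where "0 < b'" "b' < h" "0 < a'" "a' < h"
      "f (p + h *\<^sub>R v + h *\<^sub>R u) - f (p + h *\<^sub>R v) - f (p + h *\<^sub>R u) + f p
         = h * h * B (p + a' *\<^sub>R v + b' *\<^sub>R u)"
      using second_difference_mean_value[OF f h, where i=j and j=i and p=p] unfolding B_def u_def v_def by blast
    then show ?thesis using that by (simp add: algebra_simps)
  qed
  have "A (p + a *\<^sub>R u + b *\<^sub>R v) = B (p + b' *\<^sub>R u + a' *\<^sub>R v)"
    using ab(5) ab'(5) h by (simp add: algebra_simps)
  moreover have "dist (A (p + a *\<^sub>R u + b *\<^sub>R v)) (A p) < \<bar>A p - B p\<bar> / 2"
    "dist (B (p + b' *\<^sub>R u + a' *\<^sub>R v)) (B p) < \<bar>A p - B p\<bar> / 2"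
    using dA(2) dB(2) near ab ab' by auto
  ultimately show False
    by (simp add: dist_real_def abs_if split: if_splits)
qed

text \<open>\<open>nambu_bracket3 C f g = det(\<nabla>C, \<nabla>f, \<nabla>g)\<close>, expanded along the first row.\<close>

definition nambu_bracket3 :: "fn3 \<Rightarrow> fn3 \<Rightarrow> fn3 \<Rightarrow> fn3" where
  "nambu_bracket3 C f g = (\<lambda>x.
       pderiv3 1 C x * (pderiv3 2 f x * pderiv3 3 g x - pderiv3 3 f x * pderiv3 2 g x)
     + pderiv3 2 C x * (pderiv3 3 f x * pderiv3 1 g x - pderiv3 1 f x * pderiv3 3 g x)
     + pderiv3 3 C x * (pderiv3 1 f x * pderiv3 2 g x - pderiv3 2 f x * pderiv3 1 g x))"

lemma smooth3_nambu_bracket3 [intro]: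
  "smooth3 C \<Longrightarrow> smooth3 f \<Longrightarrow> smooth3 g \<Longrightarrow> smooth3 (nambu_bracket3 C f g)"
  unfolding nambu_bracket3_def by (intro smooth3_add smooth3_mult smooth3_diff smooth3_pderiv3)

lemma pderiv3_commute_simps:
  "smooth3 f \<Longrightarrow> pderiv3 1 (pderiv3 2 f) x = pderiv3 2 (pderiv3 1 f) x"
  "smooth3 f \<Longrightarrow> pderiv3 1 (pderiv3 3 f) x = pderiv3 3 (pderiv3 1 f) x"
  "smooth3 f \<Longrightarrow> pderiv3 2 (pderiv3 3 f) x = pderiv3 3 (pderiv3 2 f) x"
  by (simp_all add: pderiv3_commute)

lemma nambu_bracket3_jacobi:
  assumes "smooth3 C" "smooth3 f" "smooth3 g" "smooth3 h"
  shows "nambu_bracket3 C f (nambu_bracket3 C g h) x + nambu_bracket3 C g (nambu_bracket3 C h f) x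
       + nambu_bracket3 C h (nambu_bracket3 C f g) x = 0"
  using assms
  by (simp add: nambu_bracket3_def pderiv3_simps smooth3_add smooth3_mult smooth3_diff smooth3_pderiv3)
     (simp add: pderiv3_commute_simps algebra_simps)

lemma poisson_bracket3_nambu_bracket3:
  assumes C: "smooth3 C"
  shows "poisson_bracket3 (nambu_bracket3 C)"
  unfolding poisson_bracket3_def
proof (intro conjI allI impI)
  fix f g h :: fn3 and a c :: real
  assume "smooth3 f" "smooth3 g" "smooth3 h"
  then show "nambu_bracket3 C (\<lambda>x. a * f x + c * g x) h
               = (\<lambda>x. a * nambu_bracket3 C f h x + c * nambu_bracket3 C g h x)"
    and "nambu_bracket3 C h (\<lambda>x. a * f x + c * g x)
               = (\<lambda>x. a * nambu_bracket3 C h f x + c * nambu_bracket3 C h g x)"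
    and "nambu_bracket3 C f (\<lambda>x. g x * h x)
               = (\<lambda>x. nambu_bracket3 C f g x * h x + g x * nambu_bracket3 C f h x)"
    by (simp_all add: fun_eq_iff nambu_bracket3_def pderiv3_simps algebra_simps)
  show "(\<lambda>x. nambu_bracket3 C f (nambu_bracket3 C g h) x + nambu_bracket3 C g (nambu_bracket3 C h f) x
           + nambu_bracket3 C h (nambu_bracket3 C f g) x) = (\<lambda>x. 0)"
    using C \<open>smooth3 f\<close> \<open>smooth3 g\<close> \<open>smooth3 h\<close> by (simp add: fun_eq_iff nambu_bracket3_jacobi)
next
  fix f g :: fn3
  show "nambu_bracket3 C f g = (\<lambda>x. - nambu_bracket3 C g f x)"
    by (simp add: fun_eq_iff nambu_bracket3_def algebra_simps)
  assume "smooth3 f" "smooth3 g"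
  with C show "smooth3 (nambu_bracket3 C f g)" ..
qed

lemma nambu_bracket3_self: "nambu_bracket3 C C f = (\<lambda>x. 0)"
  by (simp add: fun_eq_iff nambu_bracket3_def algebra_simps)

lemma nambu_bracket3_linear_combination:
  assumes "smooth3 C" "smooth3 H"
  shows "nambu_bracket3 (\<lambda>x. \<alpha> * C x + \<beta> * H x) f (\<lambda>x. \<gamma> * C x + \<delta> * H x)
           = (\<lambda>x. (\<alpha> * \<delta> - \<beta> * \<gamma>) * nambu_bracket3 C f H x)"
  using assms by (simp add: fun_eq_iff nambu_bracket3_def pderiv3_simps algebra_simps)

lemma smooth3_Cb: "smooth3 (Cb b1 b2 b3)"
  unfolding Cb_def power2_eq_square by (intro smooth3_add smooth3_mult smooth3_const smooth3_component)

lemma smooth3_Hb: "smooth3 (Hb b1 b2 b3)"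
  unfolding Hb_def power2_eq_square by (intro smooth3_diff smooth3_mult smooth3_const smooth3_component)

lemma pderiv3_Cb:
  "pderiv3 k (Cb b1 b2 b3) x = (if k = 1 then - (b3 / b1) * x$1 else if k = 3 then 1 else 0)"
proof -
  define c where "c = - (b3 / (2 * b1))"
  have "Cb b1 b2 b3 = (\<lambda>x. c * (x$1 * x$1) + x$3)"
    by (simp add: fun_eq_iff Cb_def c_def power2_eq_square)
  then show ?thesis
    by (simp add: pderiv3_simps smooth3_mult smooth3_component)
      (use exhaust_3[of k] in \<open>auto simp: c_def\<close>)
qed

lemma pderiv3_Hb:
  "pderiv3 k (Hb b1 b2 b3) x = (if k = 2 then b1 * x$2 else if k = 3 then - (b1 * b2 / b3) * x$3 else 0)"
proof -
  define c d where "c = b1 / 2" and "d = - (b1 * b2 / (2 * b3))"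
  have "Hb b1 b2 b3 = (\<lambda>x. c * (x$2 * x$2) + d * (x$3 * x$3))"
    by (simp add: fun_eq_iff Hb_def c_def d_def power2_eq_square algebra_simps)
  then show ?thesis
    by (simp add: pderiv3_simps smooth3_mult smooth3_component)
      (use exhaust_3[of k] in \<open>auto simp: c_def d_def\<close>)
qed

lemma bracket_b_eq_nambu_bracket3:
  "bracket_b b1 b2 b3 \<alpha> \<beta> = nambu_bracket3 (\<lambda>x. \<alpha> * Cb b1 b2 b3 x + \<beta> * Hb b1 b2 b3 x)"
  by (simp add: fun_eq_iff bracket_b_def nambu_bracket3_def det_3 pderiv3_simps pderiv3_Cb pderiv3_Hb
      smooth3_Cb smooth3_Hb algebra_simps)

lemma system_b_eq_nambu_bracket3:
  assumes "b1 \<noteq> 0" "b3 \<noteq> 0"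
  shows "system_b b1 b2 b3 x $ i = nambu_bracket3 (Cb b1 b2 b3) (\<lambda>y. y $ i) (Hb b1 b2 b3) x"
  using exhaust_3[of i] assms
  by (auto simp: system_b_def nambu_bracket3_def pderiv3_component pderiv3_Cb pderiv3_Hb)

theorem proposition3p2:
  fixes b1 b2 b3 \<alpha> \<beta> \<gamma> \<delta> :: real
  assumes "b1 * b2 * b3 \<noteq> 0"
    and "\<alpha> * \<delta> - \<beta> * \<gamma> = 1"
  shows "hamilton_poisson_realization3 (bracket_b b1 b2 b3 \<alpha> \<beta>)
           (\<lambda>x. \<gamma> * Cb b1 b2 b3 x + \<delta> * Hb b1 b2 b3 x) (system_b b1 b2 b3)
       \<and> casimir3 (bracket_b b1 b2 b3 \<alpha> \<beta>)
           (\<lambda>x. \<alpha> * Cb b1 b2 b3 x + \<beta> * Hb b1 b2 b3 x)"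
proof -
  have smooth: "smooth3 (\<lambda>x. a * Cb b1 b2 b3 x + c * Hb b1 b2 b3 x)" for a c
    by (intro smooth3_add smooth3_mult smooth3_const smooth3_Cb smooth3_Hb)
  have "system_b b1 b2 b3 x $ i
          = bracket_b b1 b2 b3 \<alpha> \<beta> (\<lambda>y. y $ i) (\<lambda>x. \<gamma> * Cb b1 b2 b3 x + \<delta> * Hb b1 b2 b3 x) x" for i x
    using assms
    by (simp add: bracket_b_eq_nambu_bracket3 nambu_bracket3_linear_combination smooth3_Cb smooth3_Hb
        system_b_eq_nambu_bracket3)
  then show ?thesis
    unfolding hamilton_poisson_realization3_def casimir3_def
    by (simp add: smooth bracket_b_eq_nambu_bracket3 poisson_bracket3_nambu_bracket3 nambu_bracket3_self)
qed

end
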